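(* Let $\Delta\ge3$. Then $\bar{\mathrm{R}}(\mathrm{R}(\Pi^{\mathsf{orcx}}))=\Pi^{\mathsf{orcx}}$ up to renaming of labels.
   Context: Node-edge-checkable problems $(\Sigma,\mathcal{N},\mathcal{E})$ have a finite label set $\Sigma$, node constraint $\mathcal{N}$ (a set of cardinality-$\Delta$ multisets over $\Sigma$) and edge constraint $\mathcal{E}$ (a set of cardinality-$2$ multisets). Round elimination. $\mathrm{R}(\Pi)$ is defined as follows. - $\mathcal{E}_{\mathrm{R}(\Pi)}$ consists of the configurations $S_1S_2$ of nonempty subsets of $\Sigma_\Pi$ with $L_1L_2\in\mathcal{E}_\Pi$ for all $L_i\in S_i$ that are maximal. Maximal means no other such configuration dominates it via elementwise inclusion up to permutation. - $\Sigma_{\mathrm{R}(\Pi)}$ is the set of sets occurring there. - $\mathcal{N}_{\mathrm{R}(\Pi)}$ consists of the configurations over $\Sigma_{\mathrm{R}(\Pi)}$ admitting a choice in $\mathcal{N}_\Pi$. $\bar{\mathrm{R}}(\Pi)$ is defined dually. - $\mathcal{N}_{\bar{\mathrm{R}}(\Pi)}$ consists of the maximal configurations of nonempty subsets all of whose choices lie in $\mathcal{N}_\Pi$. - $\Sigma_{\bar{\mathrm{R}}(\Pi)}$ is the set of sets occurring there. - $\mathcal{E}_{\bar{\mathrm{R}}(\Pi)}$ consists of the configurations admitting a choice in $\mathcal{E}_\Pi$. $\Pi^{\mathsf{orcx}}$ has labels $\Sigma_1\cup\Sigma_2$ with $\Sigma_1=\{\mathsf O,\mathsf R,\mathsf C,\mathsf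 X\}$ and $\Sigma_2=\{\mathsf o,\mathsf r,\mathsf c,\mathsf x\}$. Its node configurations are the $L_1\dots L_\Delta$ such that: - exactly one $L_k$ lies in $\Sigma_1$; and - there are distinct $k,k'$ with all other $L_{k''}\in\{\mathsf O,\mathsf o\}$, and either ($L_k\in\{\mathsf X,\mathsf x\}$ and $L_{k'}\in\{\mathsf O,\mathsf o\}$) or ($L_k\in\{\mathsf R,\mathsf r\}$ and $L_{k'}\in\{\mathsf C,\mathsf c\}$). Its edge configurations are all configurations in $[\mathsf O]\,[\mathsf O\mathsf R\mathsf C\mathsf X]$, $[\mathsf O\mathsf R]\,[\mathsf O\mathsf R]$, $[\mathsf O\mathsf C]\,[\mathsf O\mathsf C]$, $[\mathsf o]\,[\mathsf o\mathsf r\mathsf c\mathsf x]$ and $[\mathsf o\mathsf r]\,[\mathsf o\mathsf c]$, where $[S]\,[S']$ denotes all pairs with one entry from $S$ and the other from $S'$. *)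

theory Defs
  imports Main "HOL-Library.Multiset"
begin

text \<open>A node-edge-checkable problem: (label set, node constraint, edge constraint).
  Configurations are multisets of labels.\<close>
type_synonym 'a problem = "'a set \<times> 'a multiset set \<times> 'a multiset set"

definition labels :: "'a problem \<Rightarrow> 'a set" where "labels P = fst P"
definition nodeC :: "'a problem \<Rightarrow> 'a multiset set" where "nodeC P = fst (snd P)"
definition edgeC :: "'a problem \<Rightarrow> 'a multiset set" where "edgeC P = snd (snd P)"

definition dominated :: "'a set multiset \<Rightarrow> 'a set multiset \<Rightarrow> bool" where
  "dominated C D \<longleftrightarrow> rel_mset (\<subseteq>) C D"

definition is_choice :: "'a multiset \<Rightarrow> 'a set multiset \<Rightarrow> bool" where
  "is_choice C' C \<longleftrightarrow> rel_mset (\<in>) C' C"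

definition maximal_in :: "'a set multiset set \<Rightarrow> 'a set multiset \<Rightarrow> bool" where
  "maximal_in A C \<longleftrightarrow> C \<in> A \<and> (\<forall>D\<in>A. dominated C D \<longrightarrow> D = C)"

definition RE_edge_cand :: "'a problem \<Rightarrow> 'a set multiset set" where
  "RE_edge_cand P = {{#S1, S2#} | S1 S2. S1 \<noteq> {} \<and> S2 \<noteq> {} \<and> S1 \<subseteq> labels P \<and> S2 \<subseteq> labels P \<and>
       (\<forall>L1\<in>S1. \<forall>L2\<in>S2. {#L1, L2#} \<in> edgeC P)}"

definition RE :: "nat \<Rightarrow> 'a problem \<Rightarrow> 'a set problem" where
  "RE \<Delta> P = (let E = {C. maximal_in (RE_edge_cand P) C};
                  \<Sigma> = (\<Union>C\<in>E. set_mset C);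
                  N = {C. size C = \<Delta> \<and> set_mset C \<subseteq> \<Sigma> \<and> (\<exists>C'\<in>nodeC P. is_choice C' C)}
              in (\<Sigma>, N, E))"

definition REbar_node_cand :: "nat \<Rightarrow> 'a problem \<Rightarrow> 'a set multiset set" where
  "REbar_node_cand \<Delta> P = {C. size C = \<Delta> \<and> (\<forall>S\<in>#C. S \<noteq> {} \<and> S \<subseteq> labels P) \<and>
       (\<forall>C'. is_choice C' C \<longrightarrow> C' \<in> nodeC P)}"

definition REbar :: "nat \<Rightarrow> 'a problem \<Rightarrow> 'a set problem" where
  "REbar \<Delta> P = (let N = {C. maximal_in (REbar_node_cand \<Delta> P) C};
                  \<Sigma> = (\<Union>C\<in>N. set_mset C);
                  E = {C. size C = 2 \<and> set_mset C \<subseteq> \<Sigma> \<and> (\<exists>C'\<in>edgeC P. is_choice C' C)}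
              in (\<Sigma>, N, E))"

definition iso_problem :: "'a problem \<Rightarrow> 'b problem \<Rightarrow> bool" where
  "iso_problem P Q \<longleftrightarrow> (\<exists>f. bij_betw f (labels P) (labels Q) \<and>
      image_mset f ` nodeC P = nodeC Q \<and> image_mset f ` edgeC P = edgeC Q)"

datatype orcx = BO | BR | BC | BX | so | sr | sc | sx

definition sigma1 :: "orcx set" where "sigma1 = {BO, BR, BC, BX}"
definition sigma2 :: "orcx set" where "sigma2 = {so, sr, sc, sx}"

definition orcx_node :: "nat \<Rightarrow> orcx multiset set" where
  "orcx_node \<Delta> = {M. size M = \<Delta> \<and> size (filter_mset (\<lambda>l. l \<in> sigma1) M) = 1 \<and>
      (\<exists>a b M'. M = {#a, b#} + M' \<and> set_mset M' \<subseteq> {BO, so} \<and>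
         ((a \<in> {BX, sx} \<and> b \<in> {BO, so}) \<or> (a \<in> {BR, sr} \<and> b \<in> {BC, sc})))}"

definition pairs :: "orcx set \<Rightarrow> orcx set \<Rightarrow> orcx multiset set" where
  "pairs S T = {{#a, b#} | a b. a \<in> S \<and> b \<in> T}"

definition orcx_edge :: "orcx multiset set" where
  "orcx_edge = pairs {BO} {BO, BR, BC, BX} \<union> pairs {BO, BR} {BO, BR} \<union> pairs {BO, BC} {BO, BC}
      \<union> pairs {so} {so, sr, sc, sx} \<union> pairs {so, sr} {so, sc}"

definition Pi_orcx :: "nat \<Rightarrow> orcx problem" where
  "Pi_orcx \<Delta> = (sigma1 \<union> sigma2, orcx_node \<Delta>, orcx_edge)"

end

theory Submission
  imports Defs
begin

text \<open>
  The maximal edge configurations of R(\<Pi>) are the five pairs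
  \<langle>O\<rangle>\<langle>ORCX\<rangle>, \<langle>OR\<rangle>\<langle>OR\<rangle>, \<langle>OC\<rangle>\<langle>OC\<rangle>, \<langle>o\<rangle>\<langle>orcx\<rangle>, \<langle>or\<rangle>\<langle>oc\<rangle>, and the renaming sends
  a label x of \<Pi> to the set of those eight labels of R(\<Pi>) that contain x.
  Every node configuration of \<Pi> is one of the kernels X, Ox, Rc, Cr, Orc padded with o's.
  The renamed node configurations are candidates for R-bar(R(\<Pi>)), since each of their choices
  has the original configuration as a choice. Conversely, testing a candidate against greedy
  choices shows that it consists of one set of upper labels and sets of lower labels, and that
  it contains a set of labels containing C or c and one of labels containing R or r; such a
  candidate is dominated by a renamed node configuration. The renamed configurations form an
  antichain: with the ranks X, x < R, C, r, c < O, o, inclusion between renamed labels strictly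
  increases the rank, while every node configuration has rank sum 3\<Delta> - 2.
\<close>

section \<open>Multisets and domination\<close>

lemma rel_mset_two:
  "rel_mset R {#a, b#} {#c, d#} \<longleftrightarrow> R a c \<and> R b d \<or> R a d \<and> R b c"
proof
  assume "rel_mset R {#a, b#} {#c, d#}"
  then obtain N e where N: "{#c, d#} = add_mset e N" "R a e" "rel_mset R {#b#} N"
    using msed_rel_invL[of R a "{#b#}" "{#c, d#}"] by auto
  then obtain f where "N = {#f#}" "R b f"
    using msed_rel_invL[of R b "{#}" N] by auto
  with N show "R a c \<and> R b d \<or> R a d \<and> R b c"
    by (auto simp: add_eq_conv_ex)
next
  have "rel_mset R {#a, b#} {#c, d#}" if "R a c" "R b d" for c d
    using that by (intro rel_mset_Plus rel_mset_Zero)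
  then show "R a c \<and> R b d \<or> R a d \<and> R b c \<Longrightarrow> rel_mset R {#a, b#} {#c, d#}"
    by (metis add_mset_commute)
qed

lemma rel_mset_memL:
  assumes "rel_mset R M N" "x \<in># M"
  shows "\<exists>y\<in>#N. R x y"
proof -
  obtain M' where "M = add_mset x M'"
    using assms(2) by (metis multi_member_split)
  then show ?thesis
    using msed_rel_invL[of R x M' N] assms(1) by auto
qed

lemma rel_mset_union:
  assumes "rel_mset R A C" "rel_mset R B D"
  shows "rel_mset R (A + B) (C + D)"
  using assms(2,1) by (induction rule: rel_mset_induct) (auto intro: rel_mset_Plus)

lemma rel_mset_replicate_mset:
  assumes "\<forall>x\<in>#A. R x b"
  shows "rel_mset R A (replicate_mset (size A) b)"
  using assms by (induction A) (auto intro: rel_mset_Plus)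

lemma rel_mset_size_filter_mset:
  assumes "rel_mset R M N" "\<And>x y. R x y \<Longrightarrow> P x \<longleftrightarrow> Q y"
  shows "size {#x \<in># M. P x#} = size {#y \<in># N. Q y#}"
  using assms by (induction rule: rel_mset_induct) auto

lemma rel_mset_order_trans:
  fixes A B C :: "'a::order multiset"
  assumes "rel_mset (\<le>) A B" "rel_mset (\<le>) B C"
  shows "rel_mset (\<le>) A C"
proof -
  have "rel_mset ((\<le>) OO (\<le>)) A C"
    using assms by (auto simp: multiset.rel_compp)
  moreover have "((\<le>) OO (\<le>)) = ((\<le>) :: 'a \<Rightarrow> _)"
    by (auto intro!: ext intro: order_trans)
  ultimately show ?thesis
    by simp
qed

lemma rel_mset_order_antisym:
  fixes A B :: "'a::order multiset"
  assumes "rel_mset (\<le>) A B" "rel_mset (\<le>) B A"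
  shows "A = B"
  using assms
proof (induction "size A" arbitrary: A B)
  case 0
  then show ?case
    by (auto dest: rel_mset_size)
next
  case (Suc n)
  then obtain a where a: "a \<in># A" and a_max: "\<forall>x\<in>#A. a \<le> x \<longrightarrow> a = x"
    using finite_has_maximal[of "set_mset A"] by fastforce
  then obtain A' where A: "A = add_mset a A'"
    by (metis multi_member_split)
  obtain b B' where B: "B = add_mset b B'" and "a \<le> b" and "rel_mset (\<le>) A' B'"
    using msed_rel_invL[OF Suc.prems(1)[unfolded A]] by auto
  obtain c A'' where A'': "A = add_mset c A''" and "b \<le> c" and "rel_mset (\<le>) B' A''"
    using msed_rel_invL[OF Suc.prems(2)[unfolded B]] by auto
  have "a = c"
  proof -
    have "c \<in># A"
      using A'' by simp
    moreover have "a \<le> c"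
      using \<open>a \<le> b\<close> \<open>b \<le> c\<close> by (rule order_trans)
    ultimately show ?thesis
      using a_max by blast
  qed
  then have "b = a" and "A'' = A'"
    using \<open>a \<le> b\<close> \<open>b \<le> c\<close> A A'' by auto
  moreover have "A' = B'"
  proof (rule Suc.hyps(1))
    show "n = size A'"
      using Suc.hyps(2) A by simp
  qed (use \<open>rel_mset (\<le>) A' B'\<close> \<open>rel_mset (\<le>) B' A''\<close> \<open>A'' = A'\<close> in simp_all)
  ultimately show ?case
    using A B by simp
qed

lemma rel_mset_sum_mset_mono:
  fixes f :: "'a \<Rightarrow> 'b::ordered_comm_monoid_add"
  assumes "rel_mset R M N" "\<And>x y. R x y \<Longrightarrow> f x \<le> f y"
  shows "(\<Sum>x\<in>#M. f x) \<le> (\<Sum>x\<in>#N. f x)"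
  using assms by (induction rule: rel_mset_induct) (auto intro: add_mono)

lemma rel_mset_eq_if_sum_mset_eq:
  fixes f :: "'a \<Rightarrow> 'b::ordered_cancel_comm_monoid_add"
  assumes "rel_mset R M N"
    and "\<And>x y. R x y \<Longrightarrow> f x \<le> f y"
    and "\<And>x y. R x y \<Longrightarrow> f x = f y \<Longrightarrow> x = y"
    and "(\<Sum>x\<in>#M. f x) = (\<Sum>x\<in>#N. f x)"
  shows "M = N"
  using assms
proof (induction rule: rel_mset_induct)
  case empty
  then show ?case
    by simp
next
  case (add R a b M N)
  have "f a \<le> f b" and "(\<Sum>x\<in>#M. f x) \<le> (\<Sum>x\<in>#N. f x)"
    using add rel_mset_sum_mset_mono[of R M N f] by auto
  moreover have "f a + (\<Sum>x\<in>#M. f x) = f b + (\<Sum>x\<in>#N. f x)"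
    using add.prems(3) by simp
  ultimately have "f a = f b"
    using add_less_le_mono[of "f a" "f b"] by (metis order.order_iff_strict order.irrefl)
  with \<open>f a + (\<Sum>x\<in>#M. f x) = f b + (\<Sum>x\<in>#N. f x)\<close>
  have "(\<Sum>x\<in>#M. f x) = (\<Sum>x\<in>#N. f x)"
    by simp
  then show ?case
    using add by simp
qed

lemma size_filter_mset_eq_1E:
  assumes "size {#x \<in># M. P x#} = 1"
  obtains x M' where "M = add_mset x M'" "P x" "\<forall>y\<in>#M'. \<not> P y"
proof -
  obtain x where x: "{#x \<in># M. P x#} = {#x#}"
    using size_1_singleton_mset[OF assms] by blast
  then have "P x"
    by (metis filter_mset_eq_conv multi_member_last)
  moreover have "M = add_mset x {#y \<in># M. \<not> P y#}"
    using multiset_partition[of M P] x by simp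
  ultimately show thesis
    using that by auto
qed

lemma size_eq_2E:
  assumes "size M = 2"
  obtains a b where "M = {#a, b#}"
  using assms by (metis One_nat_def Suc_1 add_mset_add_single size_mset_SucE size_1_singleton_mset)

lemma mset_subset_two_eq:
  assumes "set_mset M \<subseteq> {x, y}" "x \<noteq> y"
  shows "M = replicate_mset (count M x) x + replicate_mset (count M y) y"
proof (rule multiset_eqI)
  fix z
  show "count M z = count (replicate_mset (count M x) x + replicate_mset (count M y) y) z"
    using assms by (cases "z = x \<or> z = y") (auto simp: count_eq_zero_iff)
qed

lemma filter_mset_replicate_mset:
  "{#y \<in># replicate_mset n x. P y#} = (if P x then replicate_mset n x else {#})"
  by (induction n) auto

lemma filter_mset_neq_plus_replicate_mset:
  "{#x \<in># M. x \<noteq> a#} + replicate_mset (count M a) a = M"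
  by (rule multiset_eqI) (simp add: count_eq_zero_iff)

lemma maximal_in_eq_antichain:
  assumes "G \<subseteq> A"
    and "\<And>C. C \<in> A \<Longrightarrow> \<exists>E\<in>G. dominated C E"
    and "\<And>E E'. E \<in> G \<Longrightarrow> E' \<in> G \<Longrightarrow> dominated E E' \<Longrightarrow> E = E'"
  shows "{C. maximal_in A C} = G"
proof (intro set_eqI iffI)
  fix C
  assume "C \<in> {C. maximal_in A C}"
  then show "C \<in> G"
    using assms(2) unfolding maximal_in_def by (auto intro: subsetD[OF assms(1)])
next
  fix E
  assume "E \<in> G"
  have "D = E" if "D \<in> A" "dominated E D" for D
  proof -
    obtain E' where "E' \<in> G" "dominated D E'"
      using assms(2) \<open>D \<in> A\<close> by blast
    then have "E' = E"
      using assms(3) \<open>E \<in> G\<close> \<open>dominated E D\<close> rel_mset_order_trans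
      unfolding dominated_def by blast
    then show "D = E"
      using rel_mset_order_antisym \<open>dominated E D\<close> \<open>dominated D E'\<close>
      unfolding dominated_def by blast
  qed
  then show "E \<in> {C. maximal_in A C}"
    using \<open>E \<in> G\<close> assms(1) unfolding maximal_in_def by auto
qed

fun first_in :: "'a list \<Rightarrow> 'a set \<Rightarrow> 'a" where
  "first_in [] S = undefined"
| "first_in (x # xs) S = (if x \<in> S then x else first_in xs S)"

lemma first_in_mem: "S \<inter> set xs \<noteq> {} \<Longrightarrow> first_in xs S \<in> S \<inter> set xs"
  by (induction xs) auto

lemma first_in_append:
  "first_in (xs @ ys) S = (if S \<inter> set xs \<noteq> {} then first_in xs S else first_in ys S)"
  by (induction xs) auto

lemma first_in_append_mem:
  assumes "S \<inter> set (xs @ ys) \<noteq> {}"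
  shows "first_in (xs @ ys) S \<in> S" and "first_in (xs @ ys) S \<in> set xs \<longleftrightarrow> S \<inter> set xs \<noteq> {}"
  using assms first_in_mem[of S xs] first_in_mem[of S ys] by (auto simp: first_in_append)

section \<open>The problem \<Pi>-orcx\<close>

lemma UNIV_orcx: "(UNIV :: orcx set) = {BO, BR, BC, BX, so, sr, sc, sx}"
proof (rule UNIV_eq_I)
  show "x \<in> {BO, BR, BC, BX, so, sr, sc, sx}" for x
    by (cases x) simp_all
qed

lemma Pi_orcx_eq: "Pi_orcx \<Delta> = (UNIV, orcx_node \<Delta>, orcx_edge)"
  by (simp add: Pi_orcx_def sigma1_def sigma2_def UNIV_orcx insert_commute)

fun compatible :: "orcx \<Rightarrow> orcx \<Rightarrow> bool" where
  "compatible BO y \<longleftrightarrow> y \<in> {BO, BR, BC, BX}"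
| "compatible BR y \<longleftrightarrow> y \<in> {BO, BR}"
| "compatible BC y \<longleftrightarrow> y \<in> {BO, BC}"
| "compatible BX y \<longleftrightarrow> y = BO"
| "compatible so y \<longleftrightarrow> y \<in> {so, sr, sc, sx}"
| "compatible sr y \<longleftrightarrow> y \<in> {so, sc}"
| "compatible sc y \<longleftrightarrow> y \<in> {so, sr}"
| "compatible sx y \<longleftrightarrow> y = so"

lemma mem_pairs_iff: "{#x, y#} \<in> pairs S T \<longleftrightarrow> x \<in> S \<and> y \<in> T \<or> x \<in> T \<and> y \<in> S"
  by (auto simp: pairs_def add_eq_conv_ex)

lemma orcx_edge_iff_compatible: "{#x, y#} \<in> orcx_edge \<longleftrightarrow> compatible x y"
  unfolding orcx_edge_def Un_iff mem_pairs_iff by (cases x; cases y) simp_all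

lemma orcx_edgeE:
  assumes "C \<in> orcx_edge"
  obtains x y where "C = {#x, y#}"
  using assms by (auto simp: orcx_edge_def pairs_def)

definition orcx_kernels :: "orcx multiset set" where
  "orcx_kernels = {{#BX#}, {#BO, sx#}, {#BR, sc#}, {#BC, sr#}, {#BO, sr, sc#}}"

lemma orcx_node_kernel:
  assumes "M \<in> orcx_node \<Delta>"
  shows "{#x \<in># M. x \<noteq> so#} \<in> orcx_kernels"
proof -
  obtain a b M' where M: "size {#l \<in># M. l \<in> sigma1#} = 1" "M = {#a, b#} + M'"
    "set_mset M' \<subseteq> {BO, so}" "a \<in> {BX, sx} \<and> b \<in> {BO, so} \<or> a \<in> {BR, sr} \<and> b \<in> {BC, sc}"
    using assms unfolding orcx_node_def by blast
  define i j where "i = count M' BO" and "j = count M' so"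
  have M': "M' = replicate_mset i BO + replicate_mset j so"
    unfolding i_def j_def by (rule mset_subset_two_eq[OF M(3)]) simp
  show ?thesis
    using M(1,4) unfolding M(2) M'
    by (elim disjE conjE insertE emptyE)
      (auto simp: sigma1_def orcx_kernels_def filter_mset_replicate_mset add_mset_commute)
qed

lemma orcx_node_kernelE:
  assumes "M \<in> orcx_node \<Delta>"
  obtains K n where "K \<in> orcx_kernels" "M = K + replicate_mset n so"
  using orcx_node_kernel[OF assms] filter_mset_neq_plus_replicate_mset by metis

lemma kernel_padding_in_orcx_node:
  assumes "K \<in> orcx_kernels" "3 \<le> size K + n"
  shows "K + replicate_mset n so \<in> orcx_node (size K + n)"
proof -
  have "\<exists>a b M'. K + replicate_mset n so = {#a, b#} + M' \<and> set_mset M' \<subseteq> {BO, so} \<and>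
      (a \<in> {BX, sx} \<and> b \<in> {BO, so} \<or> a \<in> {BR, sr} \<and> b \<in> {BC, sc})"
    using assms unfolding orcx_kernels_def
  proof (elim insertE emptyE)
    assume "K = {#BX#}"
    then show ?thesis
      using assms(2) by (intro exI[of _ BX] exI[of _ so] exI[of _ "replicate_mset (n - 1) so"])
        (simp add: Suc_diff_Suc flip: replicate_mset_Suc)
  next
    assume "K = {#BO, sx#}"
    then show ?thesis
      by (intro exI[of _ sx] exI[of _ BO] exI[of _ "replicate_mset n so"]) (simp add: add_mset_commute)
  next
    assume "K = {#BR, sc#}"
    then show ?thesis
      by (intro exI[of _ BR] exI[of _ sc] exI[of _ "replicate_mset n so"]) simp
  next
    assume "K = {#BC, sr#}"
    then show ?thesis
      by (intro exI[of _ sr] exI[of _ BC] exI[of _ "replicate_mset n so"]) (simp add: add_mset_commute)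
  next
    assume "K = {#BO, sr, sc#}"
    then show ?thesis
      by (intro exI[of _ sr] exI[of _ sc] exI[of _ "add_mset BO (replicate_mset n so)"])
        (simp add: add_mset_commute)
  qed
  moreover have "size {#l \<in># K + replicate_mset n so. l \<in> sigma1#} = 1"
    using assms(1) by (auto simp: orcx_kernels_def sigma1_def filter_mset_replicate_mset)
  ultimately show ?thesis
    unfolding orcx_node_def by auto
qed

lemma orcx_node_meets:
  assumes "M \<in> orcx_node \<Delta>" "W \<in> {{BX, sx, BR, sr}, {BX, sx, BC, sc}}"
  shows "set_mset M \<inter> W \<noteq> {}"
proof -
  obtain K n where "K \<in> orcx_kernels" "M = K + replicate_mset n so"
    using orcx_node_kernelE[OF assms(1)] .
  moreover have "set_mset K \<inter> W \<noteq> {}" if "K \<in> orcx_kernels"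
    using assms(2) that unfolding orcx_kernels_def by (elim insertE emptyE) simp_all
  ultimately show ?thesis
    by auto
qed

lemma orcx_node_covers:
  assumes "3 \<le> \<Delta>"
  shows "\<exists>M\<in>orcx_node \<Delta>. x \<in># M"
proof -
  have "\<exists>K\<in>orcx_kernels. x \<in># K + replicate_mset (\<Delta> - size K) so"
    using assms by (cases x) (auto simp: orcx_kernels_def)
  then obtain K where "K \<in> orcx_kernels" "x \<in># K + replicate_mset (\<Delta> - size K) so"
    by blast
  moreover have "size K \<le> 3"
    using \<open>K \<in> orcx_kernels\<close> by (auto simp: orcx_kernels_def)
  ultimately have "K + replicate_mset (\<Delta> - size K) so \<in> orcx_node \<Delta>"
    using kernel_padding_in_orcx_node[of K "\<Delta> - size K"] assms by simp
  then show ?thesis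
    using \<open>x \<in># K + replicate_mset (\<Delta> - size K) so\<close> by blast
qed

section \<open>Round elimination R\<close>

abbreviation lab_O :: "orcx set" where "lab_O \<equiv> {BO}"
abbreviation lab_ORCX :: "orcx set" where "lab_ORCX \<equiv> {BO, BR, BC, BX}"
abbreviation lab_OR :: "orcx set" where "lab_OR \<equiv> {BO, BR}"
abbreviation lab_OC :: "orcx set" where "lab_OC \<equiv> {BO, BC}"
abbreviation lab_o :: "orcx set" where "lab_o \<equiv> {so}"
abbreviation lab_orcx :: "orcx set" where "lab_orcx \<equiv> {so, sr, sc, sx}"
abbreviation lab_or :: "orcx set" where "lab_or \<equiv> {so, sr}"
abbreviation lab_oc :: "orcx set" where "lab_oc \<equiv> {so, sc}"

definition upper_labels :: "orcx set set" where
  "upper_labels = {lab_O, lab_ORCX, lab_OR, lab_OC}"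

definition lower_labels :: "orcx set set" where
  "lower_labels = {lab_o, lab_orcx, lab_or, lab_oc}"

abbreviation R_labels :: "orcx set set" where
  "R_labels \<equiv> upper_labels \<union> lower_labels"

lemma upper_lower_labels_disjoint: "upper_labels \<inter> lower_labels = {}"
  by (auto simp: upper_labels_def lower_labels_def)

definition R_edges :: "orcx set multiset set" where
  "R_edges = {{#lab_O, lab_ORCX#}, {#lab_OR, lab_OR#}, {#lab_OC, lab_OC#},
     {#lab_o, lab_orcx#}, {#lab_or, lab_oc#}}"

lemma compatible_biclique:
  assumes "S \<noteq> {}" "T \<noteq> {}" "\<forall>x\<in>S. \<forall>y\<in>T. compatible x y"
  shows "\<exists>E\<in>R_edges. dominated {#S, T#} E"
proof -
  have ball: "(\<forall>x\<in>A. P x) \<longleftrightarrow> (\<forall>x\<in>{BO, BR, BC, BX, so, sr, sc, sx}. x \<in> A \<longrightarrow> P x)"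
    for A :: "orcx set" and P
    by (auto simp flip: UNIV_orcx)
  have nonempty: "A \<noteq> {} \<longleftrightarrow> (\<exists>x\<in>{BO, BR, BC, BX, so, sr, sc, sx}. x \<in> A)" for A :: "orcx set"
    by (auto simp flip: UNIV_orcx)
  have "S \<subseteq> lab_O \<and> T \<subseteq> lab_ORCX \<or> S \<subseteq> lab_ORCX \<and> T \<subseteq> lab_O \<or> S \<subseteq> lab_OR \<and> T \<subseteq> lab_OR
    \<or> S \<subseteq> lab_OC \<and> T \<subseteq> lab_OC \<or> S \<subseteq> lab_o \<and> T \<subseteq> lab_orcx \<or> S \<subseteq> lab_orcx \<and> T \<subseteq> lab_o
    \<or> S \<subseteq> lab_or \<and> T \<subseteq> lab_oc \<or> S \<subseteq> lab_oc \<and> T \<subseteq> lab_or"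
    using assms unfolding subset_eq nonempty ball[of S] ball[of T]
    by (simp only: ball_simps bex_simps compatible.simps insert_iff singleton_iff orcx.distinct
        simp_thms empty_iff) sat
  then show ?thesis
    by (auto simp: R_edges_def dominated_def rel_mset_two)
qed

lemma RE_edge_cand_orcx:
  "RE_edge_cand (Pi_orcx \<Delta>) =
     {{#S, T#} | S T. S \<noteq> {} \<and> T \<noteq> {} \<and> (\<forall>x\<in>S. \<forall>y\<in>T. compatible x y)}"
  by (simp add: RE_edge_cand_def Pi_orcx_eq labels_def edgeC_def orcx_edge_iff_compatible)

lemma maximal_RE_edge_cand_orcx: "{C. maximal_in (RE_edge_cand (Pi_orcx \<Delta>)) C} = R_edges"
proof (rule maximal_in_eq_antichain)
  show "R_edges \<subseteq> RE_edge_cand (Pi_orcx \<Delta>)"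
    unfolding RE_edge_cand_orcx R_edges_def by fastforce
  show "\<exists>E\<in>R_edges. dominated C E" if "C \<in> RE_edge_cand (Pi_orcx \<Delta>)" for C
    using that compatible_biclique unfolding RE_edge_cand_orcx by blast
  show "E = E'" if "E \<in> R_edges" "E' \<in> R_edges" "dominated E E'" for E E'
    using that by (auto simp: R_edges_def dominated_def rel_mset_two)
qed

lemma RE_orcx:
  "RE \<Delta> (Pi_orcx \<Delta>) =
     (R_labels, {D. size D = \<Delta> \<and> set_mset D \<subseteq> R_labels \<and> (\<exists>M\<in>orcx_node \<Delta>. is_choice M D)}, R_edges)"
proof -
  have "(\<Union>C\<in>R_edges. set_mset C) = R_labels"
    by (auto simp: R_edges_def upper_labels_def lower_labels_def)
  then show ?thesis
    unfolding RE_def Let_def maximal_RE_edge_cand_orcx by (simp add: Pi_orcx_eq nodeC_def)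
qed

lemma R_label_upper_iff:
  assumes "T \<in> R_labels" "x \<in> T"
  shows "x \<in> sigma1 \<longleftrightarrow> T \<in> upper_labels"
  using assms unfolding sigma1_def upper_labels_def lower_labels_def
  by (elim UnE insertE emptyE) auto

lemma R_node_choice_props:
  assumes "M \<in> orcx_node \<Delta>" "rel_mset (\<in>) M D" "set_mset D \<subseteq> R_labels"
  shows "size {#T \<in># D. T \<in> upper_labels#} = 1"
    and "W \<in> {{BX, sx, BR, sr}, {BX, sx, BC, sc}} \<Longrightarrow> \<exists>T\<in>#D. T \<inter> W \<noteq> {}"
proof -
  have "rel_mset (\<lambda>x T. x \<in> T \<and> T \<in> R_labels) M D"
    using assms(2) by (rule multiset.rel_mono_strong) (use assms(3) in blast)
  then have "size {#x \<in># M. x \<in> sigma1#} = size {#T \<in># D. T \<in> upper_labels#}"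
    by (rule rel_mset_size_filter_mset) (simp add: R_label_upper_iff)
  then show "size {#T \<in># D. T \<in> upper_labels#} = 1"
    using assms(1) by (simp add: orcx_node_def)
  assume "W \<in> {{BX, sx, BR, sr}, {BX, sx, BC, sc}}"
  then obtain x where "x \<in># M" "x \<in> W"
    using orcx_node_meets[OF assms(1)] by blast
  then show "\<exists>T\<in>#D. T \<inter> W \<noteq> {}"
    using rel_mset_memL[OF assms(2)] by blast
qed

section \<open>The renaming\<close>

definition containing :: "orcx \<Rightarrow> orcx set set" where
  "containing x = {T \<in> R_labels. x \<in> T}"

lemma containing_simps:
  "containing BO = upper_labels" "containing BR = {lab_OR, lab_ORCX}"
  "containing BC = {lab_OC, lab_ORCX}" "containing BX = {lab_ORCX}"
  "containing so = lower_labels" "containing sr = {lab_or, lab_orcx}"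
  "containing sc = {lab_oc, lab_orcx}" "containing sx = {lab_orcx}"
  by (auto simp: containing_def upper_labels_def lower_labels_def)

lemma containing_nonempty: "containing x \<noteq> {}"
  by (cases x) (auto simp: containing_simps upper_labels_def lower_labels_def)

lemma containing_upper_lower:
  "x \<in> sigma1 \<Longrightarrow> containing x \<subseteq> upper_labels"
  "x \<notin> sigma1 \<Longrightarrow> containing x \<subseteq> lower_labels"
  by (cases x; auto simp: containing_simps sigma1_def upper_labels_def lower_labels_def)+

lemma subset_containing_if_upper:
  "A \<subseteq> upper_labels \<Longrightarrow> A \<subseteq> containing x \<union> containing y \<Longrightarrow> y \<notin> sigma1 \<Longrightarrow> A \<subseteq> containing x"
  using containing_upper_lower(2)[of y] upper_lower_labels_disjoint by blast

lemma subset_containing_if_lower: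
  "A \<subseteq> lower_labels \<Longrightarrow> A \<subseteq> containing x \<union> containing y \<Longrightarrow> x \<in> sigma1 \<Longrightarrow> A \<subseteq> containing y"
  using containing_upper_lower(1)[of x] upper_lower_labels_disjoint by blast

fun orcx_rank :: "orcx \<Rightarrow> nat" where
  "orcx_rank BX = 1" | "orcx_rank sx = 1"
| "orcx_rank BR = 2" | "orcx_rank sr = 2" | "orcx_rank BC = 2" | "orcx_rank sc = 2"
| "orcx_rank BO = 3" | "orcx_rank so = 3"

lemma containing_subset_rank:
  assumes "containing x \<subseteq> containing y"
  shows "orcx_rank x \<le> orcx_rank y" and "orcx_rank x = orcx_rank y \<Longrightarrow> x = y"
  using assms by (cases x; cases y; auto simp: containing_simps upper_labels_def lower_labels_def)+

lemma inj_containing: "inj containing"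
proof (rule injI)
  fix x y
  assume eq: "containing x = containing y"
  then have "orcx_rank x = orcx_rank y"
    using containing_subset_rank(1)[of x y] containing_subset_rank(1)[of y x] by simp
  then show "x = y"
    using containing_subset_rank(2) eq by simp
qed

lemma sum_orcx_rank_orcx_node:
  assumes "M \<in> orcx_node \<Delta>"
  shows "(\<Sum>x\<in>#M. orcx_rank x) + 2 = 3 * \<Delta>"
proof -
  obtain K n where K: "K \<in> orcx_kernels" and M: "M = K + replicate_mset n so"
    using orcx_node_kernelE[OF assms] .
  have "(\<Sum>x\<in>#K. orcx_rank x) + 2 = 3 * size K"
    using K by (auto simp: orcx_kernels_def)
  moreover have "size K + n = \<Delta>"
    using assms M by (simp add: orcx_node_def)
  ultimately show ?thesis
    unfolding M by simp
qed

lemma orcx_node_containing_antichain: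
  assumes "M \<in> orcx_node \<Delta>" "M' \<in> orcx_node \<Delta>"
    and "dominated (image_mset containing M) (image_mset containing M')"
  shows "M = M'"
proof (rule rel_mset_eq_if_sum_mset_eq)
  show "rel_mset (\<lambda>x y. containing x \<subseteq> containing y) M M'"
    using assms(3) by (simp add: dominated_def multiset.rel_map)
  show "(\<Sum>x\<in>#M. orcx_rank x) = (\<Sum>x\<in>#M'. orcx_rank x)"
    using sum_orcx_rank_orcx_node[OF assms(1)] sum_orcx_rank_orcx_node[OF assms(2)] by simp
qed (fact containing_subset_rank)+

section \<open>Round elimination R-bar\<close>

lemma REbar_node_cand_orcx_iff:
  "C \<in> REbar_node_cand \<Delta> (RE \<Delta> (Pi_orcx \<Delta>)) \<longleftrightarrow>
     size C = \<Delta> \<and> (\<forall>S\<in>#C. S \<noteq> {} \<and> S \<subseteq> R_labels) \<and>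
     (\<forall>D. rel_mset (\<in>) D C \<longrightarrow> (\<exists>M\<in>orcx_node \<Delta>. rel_mset (\<in>) M D))"
proof -
  have "size D = size C \<and> set_mset D \<subseteq> R_labels"
    if "rel_mset (\<in>) D C" "\<forall>S\<in>#C. S \<subseteq> R_labels" for D C
    using rel_mset_size[OF that(1)] rel_mset_memL[OF that(1)] that(2) by blast
  then show ?thesis
    by (auto simp: REbar_node_cand_def RE_orcx labels_def nodeC_def is_choice_def)
qed

lemma containing_image_in_REbar_node_cand:
  assumes "M \<in> orcx_node \<Delta>"
  shows "image_mset containing M \<in> REbar_node_cand \<Delta> (RE \<Delta> (Pi_orcx \<Delta>))"
  unfolding REbar_node_cand_orcx_iff
proof (intro conjI allI impI)
  show "size (image_mset containing M) = \<Delta>"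
    using assms by (simp add: orcx_node_def)
  show "\<forall>S\<in>#image_mset containing M. S \<noteq> {} \<and> S \<subseteq> R_labels"
    using containing_nonempty by (auto simp: containing_def)
  show "\<exists>M'\<in>orcx_node \<Delta>. rel_mset (\<in>) M' D" if "rel_mset (\<in>) D (image_mset containing M)" for D
  proof
    have "rel_mset (\<lambda>T x. T \<in> containing x) D M"
      using that by (simp add: multiset.rel_map)
    then have "rel_mset (\<in>)\<inverse>\<inverse> D M"
      by (rule multiset.rel_mono_strong) (simp add: containing_def)
    then show "rel_mset (\<in>) M D"
      by (simp add: multiset.rel_flip)
  qed (fact assms)
qed

lemma REbar_node_cand_choice_props:
  assumes "C \<in> REbar_node_cand \<Delta> (RE \<Delta> (Pi_orcx \<Delta>))" "\<forall>S\<in>#C. f S \<in> S"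
  shows "size {#S \<in># C. f S \<in> upper_labels#} = 1"
    and "W \<in> {{BX, sx, BR, sr}, {BX, sx, BC, sc}} \<Longrightarrow> \<exists>S\<in>#C. f S \<inter> W \<noteq> {}"
proof -
  have C: "\<forall>S\<in>#C. S \<subseteq> R_labels"
    and choices: "\<forall>D. rel_mset (\<in>) D C \<longrightarrow> (\<exists>M\<in>orcx_node \<Delta>. rel_mset (\<in>) M D)"
    using assms(1) unfolding REbar_node_cand_orcx_iff by blast+
  have "rel_mset (\<in>) (image_mset f C) C"
    unfolding multiset.rel_map by (rule multiset.rel_refl_strong) (use assms(2) in blast)
  then obtain M where M: "M \<in> orcx_node \<Delta>" "rel_mset (\<in>) M (image_mset f C)"
    using choices by blast
  have "f S \<in> R_labels" if "S \<in># C" for S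
    using assms(2) C that by (metis subsetD)
  then have R: "set_mset (image_mset f C) \<subseteq> R_labels"
    by auto
  show "size {#S \<in># C. f S \<in> upper_labels#} = 1"
    using R_node_choice_props(1)[OF M R] by (simp add: filter_mset_image_mset)
  show "\<exists>S\<in>#C. f S \<inter> W \<noteq> {}" if "W \<in> {{BX, sx, BR, sr}, {BX, sx, BC, sc}}"
    using R_node_choice_props(2)[OF M R that] by simp
qed

lemma first_in_REbar_node_cand:
  assumes "C \<in> REbar_node_cand \<Delta> (RE \<Delta> (Pi_orcx \<Delta>))" "set (xs @ ys) = upper_labels \<union> lower_labels"
    and "S \<in># C"
  shows "first_in (xs @ ys) S \<in> S" and "first_in (xs @ ys) S \<in> set xs \<longleftrightarrow> S \<inter> set xs \<noteq> {}"
proof -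
  have "S \<noteq> {}" "S \<subseteq> set (xs @ ys)"
    using assms unfolding REbar_node_cand_orcx_iff by auto
  then have "S \<inter> set (xs @ ys) \<noteq> {}"
    by (simp add: Int_absorb2)
  then show "first_in (xs @ ys) S \<in> S" and "first_in (xs @ ys) S \<in> set xs \<longleftrightarrow> S \<inter> set xs \<noteq> {}"
    by (rule first_in_append_mem)+
qed

lemma REbar_node_cand_one_meets_upper:
  assumes "C \<in> REbar_node_cand \<Delta> (RE \<Delta> (Pi_orcx \<Delta>))"
  shows "size {#S \<in># C. S \<inter> upper_labels \<noteq> {}#} = 1"
proof -
  define xs ys where "xs = [lab_O, lab_ORCX, lab_OR, lab_OC]" and "ys = [lab_o, lab_orcx, lab_or, lab_oc]"
  have "set xs = upper_labels" "set (xs @ ys) = upper_labels \<union> lower_labels"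
    by (auto simp: xs_def ys_def upper_labels_def lower_labels_def)
  note greedy = first_in_REbar_node_cand[OF assms this(2)]
  have "{#S \<in># C. first_in (xs @ ys) S \<in> upper_labels#} = {#S \<in># C. S \<inter> upper_labels \<noteq> {}#}"
    using greedy(2) \<open>set xs = upper_labels\<close> by (intro filter_mset_cong refl) simp
  moreover have "size {#S \<in># C. first_in (xs @ ys) S \<in> upper_labels#} = 1"
    using greedy(1) by (intro REbar_node_cand_choice_props(1)[OF assms]) simp
  ultimately show ?thesis
    by simp
qed

lemma REbar_node_cand_one_avoids_lower:
  assumes "C \<in> REbar_node_cand \<Delta> (RE \<Delta> (Pi_orcx \<Delta>))"
  shows "size {#S \<in># C. S \<inter> lower_labels = {}#} = 1"
proof -
  define xs ys where "xs = [lab_o, lab_orcx, lab_or, lab_oc]" and "ys = [lab_O, lab_ORCX, lab_OR, lab_OC]"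
  have "set xs = lower_labels" "set (xs @ ys) = upper_labels \<union> lower_labels"
    by (auto simp: xs_def ys_def upper_labels_def lower_labels_def)
  note greedy = first_in_REbar_node_cand[OF assms this(2)]
  have "first_in (xs @ ys) S \<in> upper_labels \<longleftrightarrow> S \<inter> lower_labels = {}" if "S \<in># C" for S
  proof -
    have "S \<subseteq> upper_labels \<union> lower_labels"
      using assms that unfolding REbar_node_cand_orcx_iff by auto
    then show ?thesis
      using greedy[OF that] \<open>set xs = lower_labels\<close> upper_lower_labels_disjoint by blast
  qed
  then have "{#S \<in># C. first_in (xs @ ys) S \<in> upper_labels#} = {#S \<in># C. S \<inter> lower_labels = {}#}"
    by (intro filter_mset_cong refl)
  moreover have "size {#S \<in># C. first_in (xs @ ys) S \<in> upper_labels#} = 1"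
    using greedy(1) by (intro REbar_node_cand_choice_props(1)[OF assms]) simp
  ultimately show ?thesis
    by simp
qed

lemma REbar_node_cand_split:
  assumes "C \<in> REbar_node_cand \<Delta> (RE \<Delta> (Pi_orcx \<Delta>))"
  obtains U D where "C = add_mset U D" "U \<subseteq> upper_labels" "\<forall>S\<in>#D. S \<subseteq> lower_labels"
proof -
  have C: "\<forall>S\<in>#C. S \<noteq> {} \<and> S \<subseteq> upper_labels \<union> lower_labels"
    using assms unfolding REbar_node_cand_orcx_iff by blast
  obtain U D where CUD: "C = add_mset U D" and D_upper: "\<forall>S\<in>#D. \<not> S \<inter> upper_labels \<noteq> {}"
    using REbar_node_cand_one_meets_upper[OF assms] by (rule size_filter_mset_eq_1E)
  have D: "S \<noteq> {} \<and> S \<subseteq> lower_labels" if "S \<in># D" for S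
  proof -
    have "S \<noteq> {}" "S \<subseteq> upper_labels \<union> lower_labels" "S \<inter> upper_labels = {}"
      using C D_upper CUD that by auto
    then show ?thesis
      by blast
  qed
  then have "{#S \<in># D. S \<inter> lower_labels = {}#} = {#}"
    by auto
  then have "U \<inter> lower_labels = {}"
    using REbar_node_cand_one_avoids_lower[OF assms] unfolding CUD
    by (simp del: filter_mset_eq_mempty_iff split: if_splits)
  then have "U \<subseteq> upper_labels"
    using C CUD by auto
  with CUD D show thesis
    using that by blast
qed

text \<open>The greedy choice preferring the labels in \<open>xs\<close>, none of which meets \<open>W\<close>, can meet \<open>W\<close>
  only at a set avoiding \<open>xs\<close>.\<close>

lemma REbar_node_cand_meets:
  assumes "C \<in> REbar_node_cand \<Delta> (RE \<Delta> (Pi_orcx \<Delta>))" "W \<in> {{BX, sx, BR, sr}, {BX, sx, BC, sc}}"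
    and "set (xs @ ys) = upper_labels \<union> lower_labels" "\<forall>T\<in>set xs. T \<inter> W = {}"
  shows "\<exists>S\<in>#C. S \<subseteq> set ys"
proof -
  note greedy = first_in_REbar_node_cand[OF assms(1,3)]
  obtain S where S: "S \<in># C" "first_in (xs @ ys) S \<inter> W \<noteq> {}"
    using REbar_node_cand_choice_props(2)[OF assms(1) _ assms(2)] greedy(1) by blast
  then have "S \<inter> set xs = {}"
    using greedy(2)[OF S(1)] assms(4) by blast
  moreover have "S \<subseteq> set (xs @ ys)"
    using assms(1,3) S(1) unfolding REbar_node_cand_orcx_iff by auto
  ultimately show ?thesis
    using S(1) by auto
qed

lemma dominated_by_kernel:
  assumes "K \<in> orcx_kernels" "rel_mset (\<lambda>S x. S \<subseteq> containing x) A K"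
    and "\<forall>S\<in>#D. S \<subseteq> lower_labels" "3 \<le> size (A + D)"
  shows "\<exists>M\<in>orcx_node (size (A + D)). dominated (A + D) (image_mset containing M)"
proof
  have "size A = size K"
    using rel_mset_size[OF assms(2)] .
  then show "K + replicate_mset (size D) so \<in> orcx_node (size (A + D))"
    using kernel_padding_in_orcx_node[OF assms(1), of "size D"] assms(4) by simp
  have "rel_mset (\<subseteq>) D (replicate_mset (size D) lower_labels)"
    by (rule rel_mset_replicate_mset) (use assms(3) in blast)
  moreover have "rel_mset (\<subseteq>) A (image_mset containing K)"
    using assms(2) by (simp add: multiset.rel_map)
  ultimately show "dominated (A + D) (image_mset containing (K + replicate_mset (size D) so))"
    unfolding dominated_def by (simp add: rel_mset_union containing_simps)
qed

lemma subset_containing_cases: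
  assumes "C = add_mset U D" "U \<subseteq> upper_labels" "\<forall>S\<in>#D. S \<subseteq> lower_labels"
    and "S \<in># C" "S \<subseteq> containing x \<union> containing y" "x \<in> sigma1" "y \<notin> sigma1"
  shows "S = U \<and> U \<subseteq> containing x \<or> S \<in># D \<and> S \<subseteq> containing y"
proof (cases "S = U")
  case True
  then show ?thesis
    using assms(2,5,7) subset_containing_if_upper[of U x y] by simp
next
  case False
  then have "S \<in># D"
    using assms(1,4) by simp
  then show ?thesis
    using assms(3,5,6) subset_containing_if_lower[of S x y] by simp
qed

lemma dominated_by_pair_kernel:
  assumes "3 \<le> size C" "C = add_mset U D" "\<forall>S\<in>#D. S \<subseteq> lower_labels"
    and "{#u, v#} \<in> orcx_kernels" "U \<subseteq> containing u" "S \<in># D" "S \<subseteq> containing v"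
  shows "\<exists>M\<in>orcx_node (size C). dominated C (image_mset containing M)"
proof -
  obtain D' where D': "D = add_mset S D'"
    using assms(6) by (metis multi_member_split)
  have "rel_mset (\<lambda>S x. S \<subseteq> containing x) {#U, S#} {#u, v#}"
    using assms(5,7) by (intro rel_mset_Plus rel_mset_Zero)
  then show ?thesis
    using dominated_by_kernel[OF assms(4), of "{#U, S#}" D'] assms(1-3) D' by simp
qed

lemma dominated_if_subset_X:
  assumes "3 \<le> size C" "C = add_mset U D" "U \<subseteq> upper_labels" "\<forall>S\<in>#D. S \<subseteq> lower_labels"
    and "S \<in># C" "S \<subseteq> containing BX \<union> containing sx"
  shows "\<exists>M\<in>orcx_node (size C). dominated C (image_mset containing M)"
proof -
  have "S = U \<and> U \<subseteq> containing BX \<or> S \<in># D \<and> S \<subseteq> containing sx"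
    by (rule subset_containing_cases[OF assms(2-6)]) (simp_all add: sigma1_def)
  then show ?thesis
  proof (elim disjE conjE)
    assume "U \<subseteq> containing BX"
    then have "rel_mset (\<lambda>S x. S \<subseteq> containing x) {#U#} {#BX#}"
      by (intro rel_mset_Plus rel_mset_Zero)
    then show ?thesis
      using dominated_by_kernel[of "{#BX#}" "{#U#}" D] assms(1,2,4) by (simp add: orcx_kernels_def)
  next
    assume "S \<in># D" "S \<subseteq> containing sx"
    moreover have "U \<subseteq> containing BO"
      using assms(3) by (simp add: containing_simps)
    ultimately show ?thesis
      by (intro dominated_by_pair_kernel[OF assms(1,2,4), where u = BO and v = sx and S = S])
        (simp_all add: orcx_kernels_def)
  qed
qed

lemma dominated_by_orcx_node:
  assumes "3 \<le> size C" "C = add_mset U D" "U \<subseteq> upper_labels" "\<forall>S\<in>#D. S \<subseteq> lower_labels"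
    and "Sc \<in># C" "Sc \<subseteq> containing BC \<union> containing sc"
    and "Sr \<in># C" "Sr \<subseteq> containing BR \<union> containing sr"
  shows "\<exists>M\<in>orcx_node (size C). dominated C (image_mset containing M)"
proof (cases "Sc \<subseteq> containing BX \<union> containing sx")
  case True
  then show ?thesis
    using dominated_if_subset_X[OF assms(1-5)] by blast
next
  case False
  have "(containing BC \<union> containing sc) \<inter> (containing BR \<union> containing sr)
      \<subseteq> containing BX \<union> containing sx"
    by (auto simp: containing_simps)
  then have "Sc \<noteq> Sr"
    using False assms(6,8) by blast
  have "Sc = U \<and> U \<subseteq> containing BC \<or> Sc \<in># D \<and> Sc \<subseteq> containing sc"
    by (rule subset_containing_cases[OF assms(2-6)]) (simp_all add: sigma1_def)
  moreover have "Sr = U \<and> U \<subseteq> containing BR \<or> Sr \<in># D \<and> Sr \<subseteq> containing sr"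
    by (rule subset_containing_cases[OF assms(2-4,7,8)]) (simp_all add: sigma1_def)
  ultimately consider
      (upper_C) "U \<subseteq> containing BC" "Sr \<in># D" "Sr \<subseteq> containing sr"
    | (upper_R) "U \<subseteq> containing BR" "Sc \<in># D" "Sc \<subseteq> containing sc"
    | (lower) "Sc \<in># D" "Sc \<subseteq> containing sc" "Sr \<in># D" "Sr \<subseteq> containing sr"
    using \<open>Sc \<noteq> Sr\<close> by blast
  then show ?thesis
  proof cases
    case upper_C
    then show ?thesis
      by (intro dominated_by_pair_kernel[OF assms(1,2,4), where u = BC and v = sr and S = Sr])
        (simp_all add: orcx_kernels_def)
  next
    case upper_R
    then show ?thesis
      by (intro dominated_by_pair_kernel[OF assms(1,2,4), where u = BR and v = sc and S = Sc])
        (simp_all add: orcx_kernels_def)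
  next
    case lower
    then obtain D' where D': "D = add_mset Sc D'"
      by (metis multi_member_split)
    with lower \<open>Sc \<noteq> Sr\<close> obtain D'' where D'': "D' = add_mset Sr D''"
      by (metis insert_noteq_member multi_member_split)
    have "rel_mset (\<lambda>S x. S \<subseteq> containing x) {#U, Sr, Sc#} {#BO, sr, sc#}"
      using lower assms(3) by (intro rel_mset_Plus rel_mset_Zero) (simp_all add: containing_simps)
    then show ?thesis
      using dominated_by_kernel[of "{#BO, sr, sc#}" "{#U, Sr, Sc#}" D''] assms(1,2,4) D' D''
      by (simp add: orcx_kernels_def add_mset_commute)
  qed
qed

lemma maximal_REbar_node_cand_orcx:
  assumes "3 \<le> \<Delta>"
  shows "{C. maximal_in (REbar_node_cand \<Delta> (RE \<Delta> (Pi_orcx \<Delta>))) C} = image_mset containing ` orcx_node \<Delta>"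
proof (rule maximal_in_eq_antichain)
  show "image_mset containing ` orcx_node \<Delta> \<subseteq> REbar_node_cand \<Delta> (RE \<Delta> (Pi_orcx \<Delta>))"
    using containing_image_in_REbar_node_cand by blast
next
  fix C
  assume C: "C \<in> REbar_node_cand \<Delta> (RE \<Delta> (Pi_orcx \<Delta>))"
  obtain U D where UD: "C = add_mset U D" "U \<subseteq> upper_labels" "\<forall>S\<in>#D. S \<subseteq> lower_labels"
    using REbar_node_cand_split[OF C] .
  have labels_C: "set ([lab_O, lab_o, lab_OR, lab_or] @ [lab_OC, lab_oc, lab_ORCX, lab_orcx]) =
      upper_labels \<union> lower_labels"
    and labels_R: "set ([lab_O, lab_o, lab_OC, lab_oc] @ [lab_OR, lab_or, lab_ORCX, lab_orcx]) =
      upper_labels \<union> lower_labels"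
    by (auto simp: upper_labels_def lower_labels_def)
  have "\<exists>S\<in>#C. S \<subseteq> set [lab_OC, lab_oc, lab_ORCX, lab_orcx]"
    by (rule REbar_node_cand_meets[where W = "{BX, sx, BC, sc}", OF C _ labels_C]) simp_all
  moreover have "set [lab_OC, lab_oc, lab_ORCX, lab_orcx] = containing BC \<union> containing sc"
    by (auto simp: containing_simps)
  ultimately obtain Sc where Sc: "Sc \<in># C" "Sc \<subseteq> containing BC \<union> containing sc"
    by (metis (no_types, lifting))
  have "\<exists>S\<in>#C. S \<subseteq> set [lab_OR, lab_or, lab_ORCX, lab_orcx]"
    by (rule REbar_node_cand_meets[where W = "{BX, sx, BR, sr}", OF C _ labels_R]) simp_all
  moreover have "set [lab_OR, lab_or, lab_ORCX, lab_orcx] = containing BR \<union> containing sr"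
    by (auto simp: containing_simps)
  ultimately obtain Sr where Sr: "Sr \<in># C" "Sr \<subseteq> containing BR \<union> containing sr"
    by (metis (no_types, lifting))
  have "size C = \<Delta>"
    using C by (simp add: REbar_node_cand_orcx_iff)
  then show "\<exists>E\<in>image_mset containing ` orcx_node \<Delta>. dominated C E"
    using dominated_by_orcx_node[OF _ UD Sc Sr] assms by auto
next
  show "E = E'" if "E \<in> image_mset containing ` orcx_node \<Delta>" "E' \<in> image_mset containing ` orcx_node \<Delta>"
    "dominated E E'" for E E'
    using that orcx_node_containing_antichain by blast
qed

lemma REbar_labels_orcx:
  assumes "3 \<le> \<Delta>"
  shows "(\<Union>C\<in>image_mset containing ` orcx_node \<Delta>. set_mset C) = range containing"
proof
  show "range containing \<subseteq> (\<Union>C\<in>image_mset containing ` orcx_node \<Delta>. set_mset C)"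
    using orcx_node_covers[OF assms] by fastforce
qed auto

lemma R_edges_choice_iff: "(\<exists>E\<in>R_edges. is_choice E {#containing x, containing y#}) \<longleftrightarrow> compatible x y"
  by (cases x; cases y)
    (auto simp: R_edges_def is_choice_def rel_mset_two containing_simps upper_labels_def lower_labels_def)

lemma REbar_edges_orcx:
  "{C. size C = 2 \<and> set_mset C \<subseteq> range containing \<and> (\<exists>E\<in>R_edges. is_choice E C)} =
     image_mset containing ` orcx_edge"
proof (intro set_eqI iffI)
  fix C
  assume "C \<in> {C. size C = 2 \<and> set_mset C \<subseteq> range containing \<and> (\<exists>E\<in>R_edges. is_choice E C)}"
  then have C: "size C = 2" "set_mset C \<subseteq> range containing" "\<exists>E\<in>R_edges. is_choice E C"
    by auto
  then obtain x y where "C = {#containing x, containing y#}"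
    by (metis (no_types, lifting) size_eq_2E image_iff insert_subset set_mset_add_mset_insert)
  with C(3) show "C \<in> image_mset containing ` orcx_edge"
    using R_edges_choice_iff[of x y] orcx_edge_iff_compatible[of x y] by force
next
  fix C
  assume "C \<in> image_mset containing ` orcx_edge"
  then obtain M where M: "M \<in> orcx_edge" "C = image_mset containing M"
    by blast
  then obtain x y where "M = {#x, y#}"
    by (auto elim: orcx_edgeE)
  with M have "{#x, y#} \<in> orcx_edge" "C = {#containing x, containing y#}"
    by simp_all
  then show "C \<in> {C. size C = 2 \<and> set_mset C \<subseteq> range containing \<and> (\<exists>E\<in>R_edges. is_choice E C)}"
    using R_edges_choice_iff[of x y] orcx_edge_iff_compatible[of x y] by auto
qed

lemma iso_problem_image_mset:
  assumes "inj f"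
  shows "iso_problem (range f, image_mset f ` N, image_mset f ` E) (UNIV, N, E)"
proof -
  have "image_mset (inv f) ` image_mset f ` X = X" for X
    using assms by (simp add: image_image multiset.map_comp)
  then show ?thesis
    unfolding iso_problem_def labels_def nodeC_def edgeC_def
    using inj_imp_bij_betw_inv[OF assms, of UNIV] by (intro exI[of _ "inv f"]) simp
qed

theorem mainTheorem18:
  fixes \<Delta> :: nat
  assumes "\<Delta> \<ge> 3"
  shows "iso_problem (REbar \<Delta> (RE \<Delta> (Pi_orcx \<Delta>))) (Pi_orcx \<Delta>)"
proof -
  have "REbar \<Delta> (RE \<Delta> (Pi_orcx \<Delta>)) =
      (range containing, image_mset containing ` orcx_node \<Delta>, image_mset containing ` orcx_edge)"
    unfolding REbar_def Let_def maximal_REbar_node_cand_orcx[OF assms] REbar_labels_orcx[OF assms]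
    by (simp add: RE_orcx edgeC_def REbar_edges_orcx)
  then show ?thesis
    using iso_problem_image_mset[OF inj_containing] by (simp add: Pi_orcx_eq)
qed

end
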